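(* Let $D$ be an Eulerian digraph (finite, without loops, parallel arcs or digons), let $\mathcal{F}(D)$ be a cycle decomposition of $D$ with associated dicycle intersection graph $CI(D)$, and let $\hat v\in V(CI(D))$ correspond to the dicycle $C_{\hat v}\in\mathcal{F}(D)$. Suppose the subgraph $CI(D)[N[\hat v]]$ of $CI(D)$ induced by the closed neighbourhood $N[\hat v]$ (i.e. $\hat v$ together with all dicycles of $\mathcal{F}(D)$ sharing a vertex with $C_{\hat v}$) is a simple block graph (it has no parallel edges and every block of it is a complete graph). Then $V(C_{\hat v})\subseteq SV(D)$; in particular $SV(D)\neq\emptyset$.
   Context: All digraphs are finite, with no loops, no parallel arcs and no digons (a digon is a pair of arcs $u\to w$, $w\to u$), so every dicycle has length at least $3$. $N^{+}(v)$ is the set of out-neighbours of $v$; $N^{+2}(v)$ is the set of vertices $w\notin N^{+}(v)\cup\{v\}$ such that $u\to w$ is an arc for some $u\in N^{+}(v)$; $SV(D)$ is the set of vertices $v$ with $|N^{+2}(v)|\ge|N^{+}(v)|$. An Eulerian digraph is a (weakly) connected digraph with $d^{+}(x)=d^{-}(x)$ for all vertices $x$. A cycle decomposition $\mathcal{F}(D)$ is a set of dicycles whose arc sets partition $A(D)$. The dicycle intersection graph $CI(D)$ associated with $\mathcal{F}(D)$ is the multigraph with vertex set $\mathcal{F}(D)$ having, for each pair of distinct dicycles $C,C'$ and each vertex of $D$ lying on both, one edge between $C$ and $C'$. A block of a graph is a maximal 2-connected subgraph or a bridge/isolated vertex. *)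

theory Defs
  imports Main
begin

definition digraph :: "'a set \<Rightarrow> ('a \<times> 'a) set \<Rightarrow> bool" where
  "digraph V A \<longleftrightarrow> finite V \<and> A \<subseteq> V \<times> V \<and> (\<forall>x. (x, x) \<notin> A)
      \<and> (\<forall>u w. (u, w) \<in> A \<longrightarrow> (w, u) \<notin> A)"

definition out_nbrs :: "('a \<times> 'a) set \<Rightarrow> 'a \<Rightarrow> 'a set" where
  "out_nbrs A v = {w. (v, w) \<in> A}"

definition in_nbrs :: "('a \<times> 'a) set \<Rightarrow> 'a \<Rightarrow> 'a set" where
  "in_nbrs A v = {u. (u, v) \<in> A}"

definition second_out_nbrs :: "('a \<times> 'a) set \<Rightarrow> 'a \<Rightarrow> 'a set" where
  "second_out_nbrs A v =
     {w. w \<notin> out_nbrs A v \<union> {v} \<and> (\<exists>u \<in> out_nbrs A v. (u, w) \<in> A)}"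

definition SV :: "'a set \<Rightarrow> ('a \<times> 'a) set \<Rightarrow> 'a set" where
  "SV V A = {v \<in> V. card (second_out_nbrs A v) \<ge> card (out_nbrs A v)}"

definition weakly_connected :: "'a set \<Rightarrow> ('a \<times> 'a) set \<Rightarrow> bool" where
  "weakly_connected V A \<longleftrightarrow> V \<noteq> {} \<and> (\<forall>u \<in> V. \<forall>v \<in> V. (u, v) \<in> (A \<union> A\<inverse>)\<^sup>*)"

definition eulerian :: "'a set \<Rightarrow> ('a \<times> 'a) set \<Rightarrow> bool" where
  "eulerian V A \<longleftrightarrow> digraph V A \<and> weakly_connected V A
      \<and> (\<forall>x \<in> V. card (out_nbrs A x) = card (in_nbrs A x))"

text \<open>A dicycle of the digraph, represented by its arc set: the arcs between consecutive
vertices of a cyclic sequence of distinct vertices.\<close>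

definition is_dicycle :: "('a \<times> 'a) set \<Rightarrow> ('a \<times> 'a) set \<Rightarrow> bool" where
  "is_dicycle A C \<longleftrightarrow> C \<subseteq> A \<and> (\<exists>vs. distinct vs \<and> length vs \<ge> 2 \<and>
      C = {(vs ! i, vs ! ((i + 1) mod length vs)) | i. i < length vs})"

definition cyc_verts :: "('a \<times> 'a) set \<Rightarrow> 'a set" where
  "cyc_verts C = fst ` C"

definition cycle_decomposition :: "('a \<times> 'a) set \<Rightarrow> ('a \<times> 'a) set set \<Rightarrow> bool" where
  "cycle_decomposition A F \<longleftrightarrow> (\<forall>C \<in> F. is_dicycle A C)
      \<and> (\<forall>C \<in> F. \<forall>C' \<in> F. C \<noteq> C' \<longrightarrow> C \<inter> C' = {}) \<and> \<Union> F = A"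

text \<open>Dicycle intersection multigraph CI(D): vertex set F, and the number of edges between
distinct C, C' equals the number of common vertices.\<close>

definition CI_mult :: "('a \<times> 'a) set \<Rightarrow> ('a \<times> 'a) set \<Rightarrow> nat" where
  "CI_mult C C' = (if C = C' then 0 else card (cyc_verts C \<inter> cyc_verts C'))"

definition CI_adj :: "('a \<times> 'a) set \<Rightarrow> ('a \<times> 'a) set \<Rightarrow> bool" where
  "CI_adj C C' \<longleftrightarrow> CI_mult C C' > 0"

definition closed_nbhd :: "('a \<times> 'a) set set \<Rightarrow> ('a \<times> 'a) set \<Rightarrow> ('a \<times> 'a) set set" where
  "closed_nbhd F C = insert C {C' \<in> F. CI_adj C C'}"

text \<open>Generic simple-graph notions for a graph given by a vertex set W and a symmetric
irreflexive adjacency relation E; induced subgraphs are given by vertex subsets.\<close>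

definition connected_on :: "('b \<Rightarrow> 'b \<Rightarrow> bool) \<Rightarrow> 'b set \<Rightarrow> bool" where
  "connected_on E S \<longleftrightarrow> (\<forall>u \<in> S. \<forall>v \<in> S.
      (u, v) \<in> {(x, y). x \<in> S \<and> y \<in> S \<and> E x y}\<^sup>*)"

definition nonseparable :: "('b \<Rightarrow> 'b \<Rightarrow> bool) \<Rightarrow> 'b set \<Rightarrow> bool" where
  "nonseparable E B \<longleftrightarrow> B \<noteq> {} \<and> connected_on E B \<and> (\<forall>x \<in> B. connected_on E (B - {x}))"

text \<open>A block: a maximal connected subgraph without a cut vertex (maximal 2-connected
subgraph, bridge, or isolated vertex); such maximal subgraphs are induced.\<close>
definition is_block :: "'b set \<Rightarrow> ('b \<Rightarrow> 'b \<Rightarrow> bool) \<Rightarrow> 'b set \<Rightarrow> bool" where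
  "is_block W E B \<longleftrightarrow> B \<subseteq> W \<and> nonseparable E B
      \<and> (\<forall>B'. B \<subset> B' \<and> B' \<subseteq> W \<longrightarrow> \<not> nonseparable E B')"

definition block_graph :: "'b set \<Rightarrow> ('b \<Rightarrow> 'b \<Rightarrow> bool) \<Rightarrow> bool" where
  "block_graph W E \<longleftrightarrow> (\<forall>B. is_block W E B \<longrightarrow> (\<forall>u \<in> B. \<forall>v \<in> B. u \<noteq> v \<longrightarrow> E u v))"

definition CI_simple_on :: "('a \<times> 'a) set set \<Rightarrow> bool" where
  "CI_simple_on S \<longleftrightarrow> (\<forall>C \<in> S. \<forall>C' \<in> S. CI_mult C C' \<le> 1)"

end

theory Submission
  imports Defs
begin

text \<open>Fix a vertex v of the dicycle C and let T be the set of dicycles of the decomposition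
through v. Each out-arc of v lies in exactly one member of T, and a dicycle leaves v only once,
so the out-degree of v is at most |T|. Conversely, following each C' \<in> T two steps from v
gives a vertex x(C'). Since CI(D) is simple on N[C] \<supseteq> T, two members of T share no vertex
besides v; hence x(C') is not an out-neighbour of v (an arc v \<rightarrow> x(C') would put x(C') on a
second member of T) and the x(C') are pairwise distinct second out-neighbours of v.\<close>

definition cycles_through :: "('a \<times> 'a) set set \<Rightarrow> 'a \<Rightarrow> ('a \<times> 'a) set set" where
  "cycles_through F v = {C \<in> F. v \<in> cyc_verts C}"

lemma is_dicycle_finite: "is_dicycle A C \<Longrightarrow> finite C"
  unfolding is_dicycle_def by auto

lemma is_dicycle_nonempty: "is_dicycle A C \<Longrightarrow> C \<noteq> {}"
  unfolding is_dicycle_def by fastforce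

lemma is_dicycle_head_in_verts:
  assumes "is_dicycle A C" and "(v, w) \<in> C"
  shows "w \<in> cyc_verts C"
proof -
  from assms(1) obtain vs where l: "length vs \<ge> 2"
    and C: "C = {(vs ! i, vs ! ((i + 1) mod length vs)) | i. i < length vs}"
    unfolding is_dicycle_def by blast
  from assms(2) C obtain i where "w = vs ! ((i + 1) mod length vs)" by auto
  moreover have "(i + 1) mod length vs < length vs" using l by (intro mod_less_divisor) linarith
  ultimately show ?thesis using C unfolding cyc_verts_def by force
qed

lemma is_dicycle_out_arc_unique:
  assumes "is_dicycle A C" and "(v, w) \<in> C" and "(v, w') \<in> C"
  shows "w = w'"
proof -
  from assms(1) obtain vs where d: "distinct vs"
    and C: "C = {(vs ! i, vs ! ((i + 1) mod length vs)) | i. i < length vs}"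
    unfolding is_dicycle_def by blast
  from assms(2,3) C obtain i i' where
    "i < length vs" "v = vs ! i" "w = vs ! ((i + 1) mod length vs)"
    "i' < length vs" "v = vs ! i'" "w' = vs ! ((i' + 1) mod length vs)" by auto
  with d show ?thesis by (metis nth_eq_iff_index_eq)
qed

lemma finite_cycle_decomposition:
  assumes "digraph V A" and "cycle_decomposition A F"
  shows "finite F"
proof -
  have "finite A" using assms(1) unfolding digraph_def by (meson finite_SigmaI finite_subset)
  moreover have "F \<subseteq> Pow A" using assms(2) unfolding cycle_decomposition_def by blast
  ultimately show ?thesis by (meson finite_Pow_iff finite_subset)
qed

lemma card_out_nbrs_le_card_cycles_through:
  assumes "digraph V A" and "cycle_decomposition A F"
  shows "card (out_nbrs A v) \<le> card (cycles_through F v)"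
proof -
  have cyc: "\<And>C. C \<in> F \<Longrightarrow> is_dicycle A C" and cov: "\<Union> F = A"
    using assms(2) unfolding cycle_decomposition_def by auto
  have "\<forall>w \<in> out_nbrs A v. \<exists>C. C \<in> F \<and> (v, w) \<in> C"
    using cov by (auto simp: out_nbrs_def)
  then obtain f where f: "\<And>w. w \<in> out_nbrs A v \<Longrightarrow> f w \<in> F \<and> (v, w) \<in> f w"
    by metis
  have "inj_on f (out_nbrs A v)"
  proof (rule inj_onI)
    fix w w' assume "w \<in> out_nbrs A v" "w' \<in> out_nbrs A v" "f w = f w'"
    with f show "w = w'" using is_dicycle_out_arc_unique[OF cyc] by metis
  qed
  moreover have "f ` out_nbrs A v \<subseteq> cycles_through F v"
    using f unfolding cycles_through_def cyc_verts_def by force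
  moreover have "finite (cycles_through F v)"
    using finite_cycle_decomposition[OF assms] by (simp add: cycles_through_def)
  ultimately show ?thesis by (rule card_inj_on_le)
qed

lemma common_vertex_eq_if_CI_simple:
  assumes "CI_simple_on (cycles_through F v)" and "is_dicycle A C"
    and "C \<in> cycles_through F v" "C' \<in> cycles_through F v" "C \<noteq> C'"
    and "x \<in> cyc_verts C" "x \<in> cyc_verts C'"
  shows "x = v"
proof (rule ccontr)
  assume "x \<noteq> v"
  have "finite (cyc_verts C)"
    using is_dicycle_finite[OF assms(2)] by (simp add: cyc_verts_def)
  moreover have "{v, x} \<subseteq> cyc_verts C \<inter> cyc_verts C'"
    using assms(3-7) by (auto simp: cycles_through_def)
  ultimately have "card {v, x} \<le> card (cyc_verts C \<inter> cyc_verts C')"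
    by (intro card_mono) auto
  then have "card {v, x} \<le> CI_mult C C'"
    using assms(5) by (simp add: CI_mult_def)
  moreover have "CI_mult C C' \<le> 1"
    using assms(1,3,4) unfolding CI_simple_on_def by blast
  ultimately show False using \<open>x \<noteq> v\<close> by simp
qed

lemma card_cycles_through_le_card_second_out_nbrs:
  assumes "digraph V A" and "cycle_decomposition A F"
    and "CI_simple_on (cycles_through F v)"
  shows "card (cycles_through F v) \<le> card (second_out_nbrs A v)"
proof -
  let ?T = "cycles_through F v"
  have noloop: "\<And>x. (x, x) \<notin> A" and nodigon: "\<And>u w. (u, w) \<in> A \<Longrightarrow> (w, u) \<notin> A"
    using assms(1) unfolding digraph_def by auto
  have cyc: "\<And>C. C \<in> F \<Longrightarrow> is_dicycle A C" and cov: "\<Union> F = A"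
    using assms(2) unfolding cycle_decomposition_def by auto
  have cycT: "\<And>C. C \<in> ?T \<Longrightarrow> is_dicycle A C" using cyc by (simp add: cycles_through_def)
  have unique_common: "x = v"
    if "C \<in> ?T" "C' \<in> ?T" "C \<noteq> C'" "x \<in> cyc_verts C" "x \<in> cyc_verts C'" for C C' x
    using common_vertex_eq_if_CI_simple[OF assms(3) cycT] that by blast
  have "\<exists>w x. (v, w) \<in> C \<and> (w, x) \<in> C" if "C \<in> ?T" for C
  proof -
    from that obtain w where vw: "(v, w) \<in> C"
      by (auto simp: cycles_through_def cyc_verts_def)
    moreover from is_dicycle_head_in_verts[OF cycT[OF that] vw]
    obtain x where "(w, x) \<in> C" by (auto simp: cyc_verts_def)
    ultimately show ?thesis by blast
  qed
  then obtain g where g: "\<And>C. C \<in> ?T \<Longrightarrow> \<exists>w. (v, w) \<in> C \<and> (w, g C) \<in> C"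
    by metis
  have g_prop: "g C \<noteq> v \<and> g C \<in> cyc_verts C \<and> g C \<in> second_out_nbrs A v"
    if CT: "C \<in> ?T" for C
  proof -
    from g[OF CT] obtain w where vw: "(v, w) \<in> C" and wx: "(w, g C) \<in> C" by blast
    have arcs: "(v, w) \<in> A" "(w, g C) \<in> A" using vw wx cov CT by (auto simp: cycles_through_def)
    have "g C \<noteq> v" using arcs nodigon by blast
    have gC: "g C \<in> cyc_verts C" using is_dicycle_head_in_verts[OF cycT[OF CT] wx] .
    have "g C \<notin> out_nbrs A v"
    proof
      assume "g C \<in> out_nbrs A v"
      then obtain C' where C'F: "C' \<in> F" and vx: "(v, g C) \<in> C'"
        using cov by (auto simp: out_nbrs_def)
      have C'T: "C' \<in> ?T" using C'F vx by (force simp: cycles_through_def cyc_verts_def)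
      show False
      proof (cases "C' = C")
        case True
        then show False
          using is_dicycle_out_arc_unique[OF cycT[OF CT] vw] vx arcs(2) noloop by blast
      next
        case False
        then show False
          using unique_common[OF CT C'T _ gC is_dicycle_head_in_verts[OF cyc[OF C'F] vx]]
            \<open>g C \<noteq> v\<close> by blast
      qed
    qed
    then show ?thesis
      using \<open>g C \<noteq> v\<close> gC arcs by (auto simp: second_out_nbrs_def out_nbrs_def)
  qed
  have "inj_on g ?T"
  proof (rule inj_onI)
    fix C C' assume CT: "C \<in> ?T" and C'T: "C' \<in> ?T" and "g C = g C'"
    with g_prop[OF CT] g_prop[OF C'T] show "C = C'" using unique_common[OF CT C'T] by metis
  qed
  moreover have "g ` ?T \<subseteq> second_out_nbrs A v" using g_prop by blast
  moreover have "second_out_nbrs A v \<subseteq> V"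
    using assms(1) by (auto simp: digraph_def second_out_nbrs_def)
  then have "finite (second_out_nbrs A v)"
    using assms(1) finite_subset unfolding digraph_def by blast
  ultimately show ?thesis by (rule card_inj_on_le)
qed

lemma cycles_through_subset_closed_nbhd:
  assumes "cycle_decomposition A F" and "Chat \<in> F" and "v \<in> cyc_verts Chat"
  shows "cycles_through F v \<subseteq> closed_nbhd F Chat"
proof
  fix C assume "C \<in> cycles_through F v"
  then have CF: "C \<in> F" and "v \<in> cyc_verts C" by (auto simp: cycles_through_def)
  moreover have "finite (cyc_verts Chat)"
    using assms(1,2) is_dicycle_finite unfolding cycle_decomposition_def cyc_verts_def by blast
  ultimately have "C \<noteq> Chat \<Longrightarrow> CI_adj Chat C"
    using assms(3) by (auto simp: CI_adj_def CI_mult_def card_gt_0_iff)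
  with CF show "C \<in> closed_nbhd F Chat" by (auto simp: closed_nbhd_def)
qed

lemma CI_simple_on_subset: "CI_simple_on S \<Longrightarrow> S' \<subseteq> S \<Longrightarrow> CI_simple_on S'"
  unfolding CI_simple_on_def by blast

theorem mainTheorem6:
  fixes V :: "'a set" and A :: "('a \<times> 'a) set" and F :: "('a \<times> 'a) set set"
    and Chat :: "('a \<times> 'a) set"
  assumes "eulerian V A"
    and "cycle_decomposition A F"
    and "Chat \<in> F"
    and "CI_simple_on (closed_nbhd F Chat)"
    and "block_graph (closed_nbhd F Chat) CI_adj"
  shows "cyc_verts Chat \<subseteq> SV V A \<and> SV V A \<noteq> {}"
proof -
  have dg: "digraph V A" using assms(1) unfolding eulerian_def by blast
  have Chat_cyc: "is_dicycle A Chat" using assms(2,3) unfolding cycle_decomposition_def by blast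
  have "v \<in> SV V A" if v: "v \<in> cyc_verts Chat" for v
  proof -
    have "CI_simple_on (cycles_through F v)"
      using CI_simple_on_subset[OF assms(4) cycles_through_subset_closed_nbhd[OF assms(2,3) v]] .
    then have "card (out_nbrs A v) \<le> card (second_out_nbrs A v)"
      using card_out_nbrs_le_card_cycles_through[OF dg assms(2)]
        card_cycles_through_le_card_second_out_nbrs[OF dg assms(2)] by (meson le_trans)
    moreover have "Chat \<subseteq> V \<times> V"
      using Chat_cyc dg unfolding is_dicycle_def digraph_def by blast
    with v have "v \<in> V" unfolding cyc_verts_def by auto
    ultimately show ?thesis by (simp add: SV_def)
  qed
  moreover have "cyc_verts Chat \<noteq> {}"
    using is_dicycle_nonempty[OF Chat_cyc] by (simp add: cyc_verts_def)
  ultimately show ?thesis by blast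
qed

end
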